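(* For every positive integer $s$ and every nonnegative integer $t$ there exists a graph $G$ with $\chi(G)=\omega(G)=s+1$, $i(G)=t$, and $\chi_l(G)=s+t+1$.
   Context: All graphs are finite and simple; $\chi$, $\chi_l$, $\omega$ denote chromatic number, list chromatic number and clique number. A hole of $G$ is an induced cycle of length at least $4$; $G$ is chordal if it has no hole. $\mathcal H(G)$ is the set of holes and $\mathcal H(G,u)$ those containing $u$. A hole cover of $G$ is a nonempty $X\subseteq V(G)$ meeting every hole (any nonempty set if $G$ is chordal). A vertex $u$ satisfies the NC property in $G$ if there are no holes $H\in\mathcal H(G,u)$, $H'\in\mathcal H(G)\setminus\mathcal H(G,u)$ sharing two consecutive edges (two distinct edges with a common end vertex lying on both). A set $\mathcal C$ satisfies the NC property in $G$ if each of its vertices does and every hole contains at most one vertex of $\mathcal C$. Locally chordalizing all holes in $\mathcal H(G,u)$ by $u$ means adding all edges $uw$ with $w\ne u$ lying on some hole in $\mathcal H(G,u)$. For a hole cover $\mathcal C=\{u_1,\dots,u_k\}$ satisfying the NC property in $G$, set $G_0=G$, obtain $G_i$ from $G_{i-1}$ by locally chordalizing all holes in $\mathcal H(G_{i-1},u_i)$ by $u_i$, and put $\widehat G(\mathcal C)=G_k$ (independent of the ordering). Given a hole cover $\mathcal C$ of $G$, an ordered partition $(\mathcal C_1,\dots,\mathcal C_\ell)$ of $\mathcal C$ into nonempty parts is a local chordalization partition if, with $G_0=G_0^*=G-\mathcal C$ and, for $i=1,\dots,\ell$, $G_i$ the graph with $V(G_i)=V(G_{i-1}^* )\cup\mathcal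 C_i$ and $E(G_i)=E(G_{i-1}^* )\cup E\big(G-\bigcup_{j=i+1}^{\ell}\mathcal C_j\big)$ and $G_i^*=\widehat{G_i}(\mathcal C_i)$, each $\mathcal C_i$ is a hole cover of $G_i$ satisfying the NC property in $G_i$ and each $G_i^*$ is chordal. The non-chordality index $i(G)$ is $0$ if $G$ is chordal and otherwise the smallest $\ell$ such that some hole cover of $G$ admits a local chordalization partition with $\ell$ parts. *)

theory Defs
  imports Main
begin

type_synonym 'a graph = "'a set \<times> 'a set set"

definition verts :: "'a graph \<Rightarrow> 'a set" where "verts G = fst G"
definition edges :: "'a graph \<Rightarrow> 'a set set" where "edges G = snd G"

definition wf_graph :: "'a graph \<Rightarrow> bool" where
  "wf_graph G \<longleftrightarrow> finite (verts G) \<and>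
     (\<forall>e\<in>edges G. \<exists>u v. u \<noteq> v \<and> u \<in> verts G \<and> v \<in> verts G \<and> e = {u, v})"

definition adj :: "'a graph \<Rightarrow> 'a \<Rightarrow> 'a \<Rightarrow> bool" where
  "adj G u v \<longleftrightarrow> {u, v} \<in> edges G"

definition induced :: "'a graph \<Rightarrow> 'a set \<Rightarrow> 'a graph" where
  "induced G X = (verts G \<inter> X, {e \<in> edges G. e \<subseteq> X})"

definition delete :: "'a graph \<Rightarrow> 'a set \<Rightarrow> 'a graph" where
  "delete G X = induced G (verts G - X)"

definition hole :: "'a graph \<Rightarrow> 'a set \<Rightarrow> bool" where
  "hole G H \<longleftrightarrow> H \<subseteq> verts G \<and>
     (\<exists>vs. distinct vs \<and> set vs = H \<and> length vs \<ge> 4 \<and>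
        (\<forall>i<length vs. \<forall>j<length vs.
           adj G (vs ! i) (vs ! j) \<longleftrightarrow>
             (j = Suc i mod length vs \<or> i = Suc j mod length vs)))"

definition chordal :: "'a graph \<Rightarrow> bool" where
  "chordal G \<longleftrightarrow> \<not> (\<exists>H. hole G H)"

definition hole_cover :: "'a graph \<Rightarrow> 'a set \<Rightarrow> bool" where
  "hole_cover G X \<longleftrightarrow> X \<subseteq> verts G \<and> X \<noteq> {} \<and> (\<forall>H. hole G H \<longrightarrow> H \<inter> X \<noteq> {})"

text \<open>Two holes share two consecutive edges (holes are induced, so their edges are
  the graph edges inside their vertex sets).\<close>
definition share_two_consec :: "'a graph \<Rightarrow> 'a set \<Rightarrow> 'a set \<Rightarrow> bool" where
  "share_two_consec G H H' \<longleftrightarrow>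
     (\<exists>x y z. x \<noteq> z \<and> {x, y, z} \<subseteq> H \<inter> H' \<and> adj G x y \<and> adj G y z)"

definition NC_vertex :: "'a graph \<Rightarrow> 'a \<Rightarrow> bool" where
  "NC_vertex G u \<longleftrightarrow>
     \<not> (\<exists>H H'. hole G H \<and> u \<in> H \<and> hole G H' \<and> u \<notin> H' \<and> share_two_consec G H H')"

definition NC_set :: "'a graph \<Rightarrow> 'a set \<Rightarrow> bool" where
  "NC_set G C \<longleftrightarrow> (\<forall>u\<in>C. NC_vertex G u) \<and> (\<forall>H. hole G H \<longrightarrow> card (H \<inter> C) \<le> 1)"

definition loc_chordalize :: "'a graph \<Rightarrow> 'a \<Rightarrow> 'a graph" where
  "loc_chordalize G u =
     (verts G, edges G \<union> {{u, w} | w. w \<noteq> u \<and> (\<exists>H. hole G H \<and> u \<in> H \<and> w \<in> H)})"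

fun chordalize_seq :: "'a graph \<Rightarrow> 'a list \<Rightarrow> 'a graph" where
  "chordalize_seq G [] = G"
| "chordalize_seq G (u # us) = chordalize_seq (loc_chordalize G u) us"

text \<open>\<open>\<widehat>G(C)\<close>, for some ordering of the (finite) set C; the paper notes
  the result is independent of the ordering.\<close>
definition hat :: "'a graph \<Rightarrow> 'a set \<Rightarrow> 'a graph" where
  "hat G C = chordalize_seq G (SOME xs. distinct xs \<and> set xs = C)"

text \<open>Checking the conditions of a local chordalization partition, given the
  previous graph \<open>G*_{i-1}\<close> and the remaining parts.\<close>
fun lcp_valid :: "'a graph \<Rightarrow> 'a graph \<Rightarrow> 'a set list \<Rightarrow> bool" where
  "lcp_valid G Gs [] = True"
| "lcp_valid G Gs (Ci # rest) =
     (let Gi = (verts Gs \<union> Ci,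
                edges Gs \<union> edges (delete G (\<Union> (set rest))));
          Gi' = hat Gi Ci
      in hole_cover Gi Ci \<and> NC_set Gi Ci \<and> chordal Gi' \<and> lcp_valid G Gi' rest)"

definition lc_partition :: "'a graph \<Rightarrow> 'a set \<Rightarrow> 'a set list \<Rightarrow> bool" where
  "lc_partition G C Cs \<longleftrightarrow>
     hole_cover G C \<and> Cs \<noteq> [] \<and> (\<forall>X\<in>set Cs. X \<noteq> {}) \<and> \<Union> (set Cs) = C \<and>
     (\<forall>i<length Cs. \<forall>j<length Cs. i \<noteq> j \<longrightarrow> Cs ! i \<inter> Cs ! j = {}) \<and>
     lcp_valid G (delete G C) Cs"

definition nci :: "'a graph \<Rightarrow> nat" where
  "nci G = (if chordal G then 0
            else (LEAST l. \<exists>C Cs. lc_partition G C Cs \<and> length Cs = l))"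

definition proper_coloring :: "'a graph \<Rightarrow> ('a \<Rightarrow> 'c) \<Rightarrow> bool" where
  "proper_coloring G f \<longleftrightarrow>
     (\<forall>u\<in>verts G. \<forall>v\<in>verts G. adj G u v \<longrightarrow> f u \<noteq> f v)"

definition chromatic_number :: "'a graph \<Rightarrow> nat" where
  "chromatic_number G =
     (LEAST k. \<exists>f :: 'a \<Rightarrow> nat. proper_coloring G f \<and> (\<forall>v\<in>verts G. f v < k))"

definition list_chromatic_number :: "'a graph \<Rightarrow> nat" where
  "list_chromatic_number G =
     (LEAST k. \<forall>L :: 'a \<Rightarrow> nat set. (\<forall>v\<in>verts G. finite (L v) \<and> card (L v) = k) \<longrightarrow>
        (\<exists>f. proper_coloring G f \<and> (\<forall>v\<in>verts G. f v \<in> L v)))"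

definition is_clique :: "'a graph \<Rightarrow> 'a set \<Rightarrow> bool" where
  "is_clique G K \<longleftrightarrow> K \<subseteq> verts G \<and> (\<forall>u\<in>K. \<forall>v\<in>K. u \<noteq> v \<longrightarrow> adj G u v)"

definition clique_number :: "'a graph \<Rightarrow> nat" where
  "clique_number G = Max {card K | K. is_clique G K}"

end

theory Submission
  imports Defs "HOL-Library.FuncSet"
begin

text \<open>The witness is \<open>K\<^sub>s\<^sub>-\<^sub>1 \<or> K\<^sub>t\<^sub>+\<^sub>1\<^sub>,\<^sub>N\<close> with \<open>k = s + t\<close> and \<open>N = k\<^sup>k\<close>: the
  complement of two disjoint cliques \<open>A\<close> (\<open>|A| = t + 1\<close>) and \<open>B\<close> (\<open>|B| = N\<close>) inside a clique.
  A largest clique takes the \<open>s - 1\<close> universal vertices and one vertex of each side, and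
  colouring each side with a single colour shows \<open>\<chi> = \<omega> = s + 1\<close>.  Listing \<open>B\<close> last, every
  vertex has at most \<open>k\<close> earlier neighbours, so greedy colouring gives \<open>(k + 1)\<close>-choosability;
  giving the \<open>k\<close> vertices outside \<open>B\<close> disjoint lists of size \<open>k\<close> and the vertices of \<open>B\<close> all
  \<open>k\<^sup>k\<close> transversals of these lists shows that lists of size \<open>k\<close> do not suffice.

  For the non-chordality index, deleting all of \<open>A\<close> but one vertex leaves a chordal graph, and
  adding the deleted vertices back one at a time is a local chordalization partition with
  \<open>t\<close> parts.  Conversely, the last graph of any local chordalization partition is a chordal
  supergraph of \<open>G\<close>, so one side, say \<open>A\<close>, has become a clique: otherwise two nonadjacent
  vertices of each side form a 4-hole.  When a part contains two vertices of \<open>A\<close>, the NC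
  property forbids a 4-hole through them, so the remaining vertices of \<open>B\<close> already form a
  clique, the current graph is chordal, and its vertices of \<open>A\<close> stay pairwise nonadjacent.
  Hence the vertices of \<open>A\<close> outside the hole cover, together with those added in parts with
  two or more of them, remain independent to the end, so there is at most one of them; every
  other vertex of \<open>A\<close> is the only vertex of \<open>A\<close> in its part, and \<open>|A| \<le> \<ell> + 1\<close>.\<close>

lemma adj_commute: "adj G u v \<longleftrightarrow> adj G v u"
  by (simp add: adj_def insert_commute)

definition simple_edges :: "'a graph \<Rightarrow> bool" where
  "simple_edges G \<longleftrightarrow>
     (\<forall>e\<in>edges G. \<exists>u v. u \<noteq> v \<and> u \<in> verts G \<and> v \<in> verts G \<and> e = {u, v})"

lemma wf_graph_iff_simple_edges: "wf_graph G \<longleftrightarrow> finite (verts G) \<and> simple_edges G"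
  by (simp add: wf_graph_def simple_edges_def)

lemma simple_edges_not_adj_self: "simple_edges G \<Longrightarrow> \<not> adj G v v"
  unfolding simple_edges_def adj_def by (metis doubleton_eq_iff insert_absorb2)

lemma simple_edges_subset_verts: "simple_edges G \<Longrightarrow> e \<in> edges G \<Longrightarrow> e \<subseteq> verts G"
  unfolding simple_edges_def by force

lemma adj_verts: "simple_edges G \<Longrightarrow> adj G x y \<Longrightarrow> x \<in> verts G \<and> y \<in> verts G"
  unfolding adj_def using simple_edges_subset_verts by blast

lemma verts_delete [simp]: "verts (delete G R) = verts G - R"
  by (auto simp: delete_def induced_def verts_def)

lemma edges_delete: "edges (delete G R) = {e \<in> edges G. e \<subseteq> verts G - R}"
  by (simp add: delete_def induced_def edges_def verts_def)

lemma adj_delete: "adj (delete G R) x y \<longleftrightarrow> adj G x y \<and> x \<in> verts G - R \<and> y \<in> verts G - R"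
  by (auto simp: adj_def edges_delete)

lemma graph_eqI:
  assumes "simple_edges G" "simple_edges G'" "verts G = verts G'" "\<And>x y. adj G x y \<longleftrightarrow> adj G' x y"
  shows "G = G'"
proof -
  have "e \<in> edges G \<longleftrightarrow> e \<in> edges G'" if "e \<in> edges G \<union> edges G'" for e
  proof -
    have "\<exists>x y. e = {x, y}"
      using that assms(1,2) unfolding simple_edges_def by (meson UnE)
    then obtain x y where "e = {x, y}" by blast
    then show ?thesis using assms(4)[of x y] unfolding adj_def by simp
  qed
  then have "edges G = edges G'" by blast
  then show ?thesis using assms(3) by (simp add: verts_def edges_def prod_eq_iff)
qed

lemma simple_edges_delete: "simple_edges G \<Longrightarrow> simple_edges (delete G R)"
  unfolding simple_edges_def edges_delete by fastforce

section \<open>Holes\<close>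

lemma cycle_index_facts:
  fixes k n :: nat
  assumes "4 \<le> n" "k < n"
  shows "Suc k mod n < n" "(k + 2) mod n < n" "(k + 2) mod n \<noteq> k"
    "(k + 2) mod n \<noteq> Suc k mod n" "k \<noteq> Suc ((k + 2) mod n) mod n"
proof -
  have mod2: "(k + 2) mod n = (if k + 2 < n then k + 2 else k + 2 - n)"
    using assms by (simp add: mod_if le_mod_geq)
  have mod1: "Suc x mod n = (if Suc x < n then Suc x else 0)" if "x < n" for x
    using assms that by (simp add: mod_if)
  show "Suc k mod n < n" "(k + 2) mod n < n" using assms by auto
  show "(k + 2) mod n \<noteq> k" "(k + 2) mod n \<noteq> Suc k mod n"
    using mod2 mod1[OF assms(2)] assms by auto
  then show "k \<noteq> Suc ((k + 2) mod n) mod n"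
    using mod2 mod1[of "(k + 2) mod n"] assms by (auto split: if_splits)
qed

lemma hole_neighbour_and_non_neighbour:
  assumes "hole G H" "x \<in> H"
  shows "\<exists>y\<in>H. adj G x y" "\<exists>z\<in>H. z \<noteq> x \<and> \<not> adj G x z"
proof -
  obtain vs where vs: "distinct vs" "set vs = H" "4 \<le> length vs"
    and cyc: "\<forall>i<length vs. \<forall>j<length vs.
                adj G (vs ! i) (vs ! j) \<longleftrightarrow> (j = Suc i mod length vs \<or> i = Suc j mod length vs)"
    using assms(1) unfolding hole_def by blast
  obtain k where k: "k < length vs" "vs ! k = x"
    using assms(2) vs(2) by (auto simp: in_set_conv_nth)
  note idx = cycle_index_facts[OF vs(3) k(1)]
  show "\<exists>y\<in>H. adj G x y"
    using cyc k idx vs(2) by (metis nth_mem)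
  have "vs ! ((k + 2) mod length vs) \<noteq> x"
    using idx k vs(1) nth_eq_iff_index_eq by metis
  moreover have "\<not> adj G x (vs ! ((k + 2) mod length vs))"
    using cyc k idx by blast
  ultimately show "\<exists>z\<in>H. z \<noteq> x \<and> \<not> adj G x z"
    using idx vs(2) by (metis nth_mem)
qed

lemma hole_nonempty: "hole G H \<Longrightarrow> H \<noteq> {}"
  unfolding hole_def by force

lemma hole_subset_verts: "hole G H \<Longrightarrow> H \<subseteq> verts G"
  unfolding hole_def by blast

text \<open>Both ends of an edge of a hole have non-neighbours on the hole.\<close>
lemma no_hole_if_non_neighbours_independent:
  assumes "hole G H"
    and "\<And>x z. x \<in> H \<Longrightarrow> z \<in> H \<Longrightarrow> z \<noteq> x \<Longrightarrow> \<not> adj G x z \<Longrightarrow> x \<in> Y"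
    and "\<And>x y. x \<in> Y \<Longrightarrow> y \<in> Y \<Longrightarrow> \<not> adj G x y"
  shows False
proof -
  obtain x where x: "x \<in> H" using hole_nonempty[OF assms(1)] by blast
  then obtain y where y: "y \<in> H" "adj G x y"
    using hole_neighbour_and_non_neighbour(1)[OF assms(1)] by blast
  have "x \<in> Y" "y \<in> Y"
    using x y assms(2) hole_neighbour_and_non_neighbour(2)[OF assms(1)] by meson+
  then show False using y(2) assms(3) by blast
qed

lemma hole_4cycle:
  assumes "distinct [p, q, r, w]" "{p, q, r, w} \<subseteq> verts G" "\<And>v. \<not> adj G v v"
    and "adj G p q" "adj G q r" "adj G r w" "adj G w p" "\<not> adj G p r" "\<not> adj G q w"
  shows "hole G {p, q, r, w}"
proof -
  have sym: "adj G q p" "adj G r q" "adj G w r" "adj G p w" "\<not> adj G r p" "\<not> adj G w q"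
    using assms(4-9) adj_commute by metis+
  have "\<forall>i<4. \<forall>j<4. adj G ([p, q, r, w] ! i) ([p, q, r, w] ! j) \<longleftrightarrow>
                    (j = Suc i mod 4 \<or> i = Suc j mod 4)"
  proof (intro allI impI)
    fix i j :: nat
    assume "i < 4" "j < 4"
    then have "i = 0 \<or> i = 1 \<or> i = 2 \<or> i = 3" "j = 0 \<or> j = 1 \<or> j = 2 \<or> j = 3" by auto
    then show "adj G ([p, q, r, w] ! i) ([p, q, r, w] ! j) \<longleftrightarrow> (j = Suc i mod 4 \<or> i = Suc j mod 4)"
      using assms(3-9) sym by (elim disjE) simp_all
  qed
  then show ?thesis
    unfolding hole_def using assms(1,2) by (intro conjI exI[of _ "[p, q, r, w]"]) auto
qed

lemma hole_transfer:
  assumes "hole G H" "H \<subseteq> verts G'" "\<And>x y. x \<in> H \<Longrightarrow> y \<in> H \<Longrightarrow> adj G' x y \<longleftrightarrow> adj G x y"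
  shows "hole G' H"
proof -
  obtain vs where vs: "distinct vs" "set vs = H" "4 \<le> length vs"
    and cyc: "\<forall>i<length vs. \<forall>j<length vs.
                adj G (vs ! i) (vs ! j) \<longleftrightarrow> (j = Suc i mod length vs \<or> i = Suc j mod length vs)"
    using assms(1) unfolding hole_def by blast
  have "adj G' (vs ! i) (vs ! j) \<longleftrightarrow> adj G (vs ! i) (vs ! j)" if "i < length vs" "j < length vs" for i j
    using assms(3) that vs(2) nth_mem by blast
  then show ?thesis
    unfolding hole_def using assms(2) vs cyc by (intro conjI exI[of _ vs]) auto
qed

section \<open>Local chordalization\<close>

lemma verts_loc_chordalize [simp]: "verts (loc_chordalize G u) = verts G"
  by (simp add: loc_chordalize_def verts_def)

lemma edges_loc_chordalize:
  "edges (loc_chordalize G u) =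
     edges G \<union> {{u, w} | w. w \<noteq> u \<and> (\<exists>H. hole G H \<and> u \<in> H \<and> w \<in> H)}"
  by (simp add: loc_chordalize_def edges_def)

lemma adj_loc_chordalize:
  "adj (loc_chordalize G u) x y \<longleftrightarrow>
     adj G x y \<or> (x \<noteq> y \<and> (x = u \<or> y = u) \<and> (\<exists>H. hole G H \<and> x \<in> H \<and> y \<in> H))"
  unfolding adj_def edges_loc_chordalize by (auto simp: doubleton_eq_iff)

lemma simple_edges_loc_chordalize:
  assumes "simple_edges G"
  shows "simple_edges (loc_chordalize G u)"
  unfolding simple_edges_def verts_loc_chordalize
proof
  fix e assume "e \<in> edges (loc_chordalize G u)"
  then consider "e \<in> edges G" | w H where "e = {u, w}" "w \<noteq> u" "hole G H" "u \<in> H" "w \<in> H"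
    unfolding edges_loc_chordalize by blast
  then show "\<exists>x y. x \<noteq> y \<and> x \<in> verts G \<and> y \<in> verts G \<and> e = {x, y}"
  proof cases
    case 1
    then show ?thesis using assms unfolding simple_edges_def by blast
  next
    case (2 w H)
    then show ?thesis using hole_subset_verts[of G H] by (intro exI[of _ u] exI[of _ w]) auto
  qed
qed

lemma verts_chordalize_seq [simp]: "verts (chordalize_seq G xs) = verts G"
  by (induction xs arbitrary: G) auto

lemma edges_chordalize_seq_mono: "edges G \<subseteq> edges (chordalize_seq G xs)"
proof (induction xs arbitrary: G)
  case (Cons a xs)
  have "edges G \<subseteq> edges (loc_chordalize G a)" by (simp add: edges_loc_chordalize)
  with Cons[of "loc_chordalize G a"] show ?case by simp
qed simp

lemma edges_chordalize_seq_subset: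
  "edges (chordalize_seq G xs) \<subseteq> edges G \<union> {{u, w} | u w. u \<in> set xs \<and> w \<in> verts G \<and> w \<noteq> u}"
proof (induction xs arbitrary: G)
  case (Cons a xs)
  have "edges (loc_chordalize G a) \<subseteq>
          edges G \<union> {{u, w} | u w. u \<in> set (a # xs) \<and> w \<in> verts G \<and> w \<noteq> u}"
    unfolding edges_loc_chordalize using hole_subset_verts by fastforce
  moreover have "{{u, w} | u w. u \<in> set xs \<and> w \<in> verts G \<and> w \<noteq> u} \<subseteq>
      {{u, w} | u w. u \<in> set (a # xs) \<and> w \<in> verts G \<and> w \<noteq> u}"
    by auto
  ultimately show ?case
    using Cons[of "loc_chordalize G a"] unfolding chordalize_seq.simps verts_loc_chordalize
    by (meson Un_least le_supI1 order_trans sup.cobounded2)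
qed simp

lemma chordalize_seq_chordal: "chordal G \<Longrightarrow> chordalize_seq G xs = G"
proof (induction xs)
  case (Cons a xs)
  then have "loc_chordalize G a = G"
    by (simp add: chordal_def loc_chordalize_def verts_def edges_def)
  with Cons show ?case by simp
qed simp

lemma hat_order:
  "finite C \<Longrightarrow> distinct (SOME xs. distinct xs \<and> set xs = C) \<and> set (SOME xs. distinct xs \<and> set xs = C) = C"
  by (rule someI_ex) (use finite_distinct_list in blast)

lemma verts_hat [simp]: "verts (hat G C) = verts G"
  by (simp add: hat_def)

lemma edges_hat_mono: "edges G \<subseteq> edges (hat G C)"
  by (simp add: hat_def edges_chordalize_seq_mono)

lemma edges_hat_subset:
  "finite C \<Longrightarrow> edges (hat G C) \<subseteq> edges G \<union> {{u, w} | u w. u \<in> C \<and> w \<in> verts G \<and> w \<noteq> u}"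
  using edges_chordalize_seq_subset[of G "SOME xs. distinct xs \<and> set xs = C"] hat_order[of C]
  by (simp add: hat_def)

lemma hat_chordal: "chordal G \<Longrightarrow> hat G C = G"
  by (simp add: hat_def chordalize_seq_chordal)

lemma hat_singleton: "hat G {a} = loc_chordalize G a"
proof -
  let ?xs = "SOME xs. distinct xs \<and> set xs = {a}"
  have "distinct ?xs" "set ?xs = {a}" using hat_order[of "{a}"] by simp_all
  then have "length ?xs = 1" using distinct_card[of ?xs] by simp
  then obtain x where "?xs = [x]" by (auto simp: length_Suc_conv)
  with \<open>set ?xs = {a}\<close> have "?xs = [a]" by simp
  then show ?thesis by (simp add: hat_def)
qed

section \<open>Local chordalization partitions\<close>

fun disjoint_parts :: "'a set list \<Rightarrow> bool" where
  "disjoint_parts [] = True"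
| "disjoint_parts (C # Cs) \<longleftrightarrow> C \<inter> \<Union> (set Cs) = {} \<and> disjoint_parts Cs"

lemma disjoint_parts_if_nth_disjoint:
  "(\<forall>i<length Cs. \<forall>j<length Cs. i \<noteq> j \<longrightarrow> Cs ! i \<inter> Cs ! j = {}) \<Longrightarrow> disjoint_parts Cs"
proof (induction Cs)
  case (Cons C Cs)
  have "C \<inter> Cs ! j = {}" if "j < length Cs" for j
    using Cons.prems[rule_format, of 0 "Suc j"] that by simp
  then have "C \<inter> \<Union> (set Cs) = {}" by (fastforce simp: in_set_conv_nth)
  moreover have "\<forall>i<length Cs. \<forall>j<length Cs. i \<noteq> j \<longrightarrow> Cs ! i \<inter> Cs ! j = {}"
    using Cons.prems by (metis Suc_inject Suc_less_eq length_Cons nth_Cons_Suc)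
  ultimately show ?case using Cons.IH by simp
qed simp

text \<open>The graph \<open>G\<^sub>i\<close> of a local chordalization partition, built from \<open>G\<^sup>*\<^sub>i\<^sub>-\<^sub>1 = Gs\<close>.\<close>
definition stage_graph :: "'a graph \<Rightarrow> 'a graph \<Rightarrow> 'a set \<Rightarrow> 'a set list \<Rightarrow> 'a graph" where
  "stage_graph G Gs Ci rest = (verts Gs \<union> Ci, edges Gs \<union> edges (delete G (\<Union> (set rest))))"

fun final_graph :: "'a graph \<Rightarrow> 'a graph \<Rightarrow> 'a set list \<Rightarrow> 'a graph" where
  "final_graph G Gs [] = Gs"
| "final_graph G Gs (Ci # rest) = final_graph G (hat (stage_graph G Gs Ci rest) Ci) rest"

lemma lcp_valid_Cons:
  "lcp_valid G Gs (Ci # rest) \<longleftrightarrow>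
     hole_cover (stage_graph G Gs Ci rest) Ci \<and> NC_set (stage_graph G Gs Ci rest) Ci \<and>
     chordal (hat (stage_graph G Gs Ci rest) Ci) \<and>
     lcp_valid G (hat (stage_graph G Gs Ci rest) Ci) rest"
  by (simp add: stage_graph_def Let_def)

lemma verts_stage_graph [simp]: "verts (stage_graph G Gs Ci rest) = verts Gs \<union> Ci"
  by (simp add: stage_graph_def verts_def)

lemma edges_stage_graph:
  "edges (stage_graph G Gs Ci rest) = edges Gs \<union> {e \<in> edges G. e \<subseteq> verts G - \<Union> (set rest)}"
  by (simp add: stage_graph_def edges_delete[symmetric]) (simp add: edges_def)

lemma adj_stage_graph:
  "adj (stage_graph G Gs Ci rest) x y \<longleftrightarrow>
     adj Gs x y \<or> (adj G x y \<and> x \<in> verts G - \<Union> (set rest) \<and> y \<in> verts G - \<Union> (set rest))"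
  by (auto simp: adj_def edges_stage_graph)

lemma simple_edges_stage_graphI:
  assumes "simple_edges G" "simple_edges Gs" "verts G - \<Union> (set rest) \<subseteq> verts Gs \<union> Ci"
  shows "simple_edges (stage_graph G Gs Ci rest)"
  unfolding simple_edges_def edges_stage_graph verts_stage_graph
proof
  fix e assume "e \<in> edges Gs \<union> {e \<in> edges G. e \<subseteq> verts G - \<Union> (set rest)}"
  then consider "e \<in> edges Gs" | "e \<in> edges G" "e \<subseteq> verts G - \<Union> (set rest)" by blast
  then show "\<exists>u v. u \<noteq> v \<and> u \<in> verts Gs \<union> Ci \<and> v \<in> verts Gs \<union> Ci \<and> e = {u, v}"
  proof cases
    case 1
    then show ?thesis using assms(2) unfolding simple_edges_def by blast
  next
    case 2
    then obtain u v where "u \<noteq> v" "e = {u, v}" using assms(1) unfolding simple_edges_def by blast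
    then show ?thesis using 2 assms(3) by (intro exI[of _ u] exI[of _ v]) auto
  qed
qed

lemma final_graph_chordal: "lcp_valid G Gs Cs \<Longrightarrow> Cs \<noteq> [] \<Longrightarrow> chordal (final_graph G Gs Cs)"
proof (induction Cs arbitrary: Gs)
  case (Cons Ci rest)
  then show ?case by (cases rest) (simp_all del: lcp_valid.simps add: lcp_valid_Cons)
qed simp

definition lcp_invariant :: "'a graph \<Rightarrow> 'a graph \<Rightarrow> 'a set list \<Rightarrow> bool" where
  "lcp_invariant G Gs Cs \<longleftrightarrow>
     verts Gs \<inter> \<Union> (set Cs) = {} \<and> verts Gs \<union> \<Union> (set Cs) = verts G \<and> disjoint_parts Cs \<and>
     simple_edges Gs \<and> (\<forall>e\<in>edges G. e \<subseteq> verts Gs \<longrightarrow> e \<in> edges Gs)"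

lemma lcp_invariant_start:
  assumes "wf_graph G" "lc_partition G C Cs"
  shows "lcp_invariant G (delete G C) Cs"
proof -
  have "C \<subseteq> verts G" "\<Union> (set Cs) = C" "disjoint_parts Cs"
    using assms(2) disjoint_parts_if_nth_disjoint unfolding lc_partition_def hole_cover_def by auto
  moreover have "simple_edges (delete G C)"
    using assms(1) simple_edges_delete wf_graph_iff_simple_edges by blast
  ultimately show ?thesis unfolding lcp_invariant_def edges_delete by auto
qed

context
  fixes G Gs :: "'a graph" and Ci :: "'a set" and rest :: "'a set list"
  assumes wf: "wf_graph G" and inv: "lcp_invariant G Gs (Ci # rest)"
begin

lemma verts_stage_graph_eq: "verts (stage_graph G Gs Ci rest) = verts G - \<Union> (set rest)"
  using inv unfolding lcp_invariant_def by auto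

lemma simple_edges_stage_graph: "simple_edges (stage_graph G Gs Ci rest)"
  using inv wf verts_stage_graph_eq
  by (intro simple_edges_stage_graphI) (auto simp: lcp_invariant_def wf_graph_iff_simple_edges)

lemma finite_part: "finite Ci"
proof (rule finite_subset)
  show "Ci \<subseteq> verts G" using inv unfolding lcp_invariant_def by auto
  show "finite (verts G)" using wf by (simp add: wf_graph_def)
qed

lemma lcp_invariant_hat: "lcp_invariant G (hat (stage_graph G Gs Ci rest) Ci) rest"
proof -
  let ?Gi = "stage_graph G Gs Ci rest"
  have "simple_edges (hat ?Gi Ci)"
    unfolding simple_edges_def verts_hat
  proof
    fix e assume "e \<in> edges (hat ?Gi Ci)"
    then have "e \<in> edges ?Gi \<or> (\<exists>u w. e = {u, w} \<and> u \<in> Ci \<and> w \<in> verts ?Gi \<and> w \<noteq> u)"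
      using edges_hat_subset[OF finite_part, of ?Gi] by blast
    then show "\<exists>u v. u \<noteq> v \<and> u \<in> verts ?Gi \<and> v \<in> verts ?Gi \<and> e = {u, v}"
      using simple_edges_stage_graph unfolding simple_edges_def by auto
  qed
  moreover have "\<forall>e\<in>edges G. e \<subseteq> verts (hat ?Gi Ci) \<longrightarrow> e \<in> edges (hat ?Gi Ci)"
    using edges_hat_mono[of ?Gi Ci] verts_stage_graph_eq unfolding edges_stage_graph by auto
  moreover have "verts (hat ?Gi Ci) \<inter> \<Union> (set rest) = {}"
    "verts (hat ?Gi Ci) \<union> \<Union> (set rest) = verts G" "disjoint_parts rest"
    using inv verts_stage_graph_eq unfolding lcp_invariant_def by auto
  ultimately show ?thesis unfolding lcp_invariant_def by blast
qed

end

lemma lcp_invariant_final: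
  "wf_graph G \<Longrightarrow> lcp_invariant G Gs Cs \<Longrightarrow> lcp_invariant G (final_graph G Gs Cs) []"
  by (induction Cs arbitrary: Gs) (simp_all add: lcp_invariant_hat)

section \<open>Colourings and choosability\<close>

lemma card_clique_le_colours:
  assumes "is_clique G K" "proper_coloring G f" "\<forall>v\<in>verts G. f v < (c :: nat)"
  shows "card K \<le> c"
proof -
  have "inj_on f K" using assms(1,2) unfolding is_clique_def proper_coloring_def inj_on_def by blast
  then have "card K = card (f ` K)" by (simp add: card_image)
  also have "\<dots> \<le> card {0..<c}" using assms(1,3) unfolding is_clique_def by (intro card_mono) auto
  finally show ?thesis by simp
qed

definition choosable :: "'a graph \<Rightarrow> nat \<Rightarrow> bool" where
  "choosable G k \<longleftrightarrow>
     (\<forall>L :: 'a \<Rightarrow> nat set. (\<forall>v\<in>verts G. finite (L v) \<and> card (L v) = k) \<longrightarrow>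
        (\<exists>f. proper_coloring G f \<and> (\<forall>v\<in>verts G. f v \<in> L v)))"

lemma list_chromatic_number_eq_Least: "list_chromatic_number G = (LEAST k. choosable G k)"
  unfolding list_chromatic_number_def choosable_def ..

lemma choosable_Suc: "choosable G k \<Longrightarrow> choosable G (Suc k)"
  unfolding choosable_def
proof (intro allI impI)
  fix L :: "'a \<Rightarrow> nat set"
  assume k: "\<forall>L :: 'a \<Rightarrow> nat set. (\<forall>v\<in>verts G. finite (L v) \<and> card (L v) = k) \<longrightarrow>
        (\<exists>f. proper_coloring G f \<and> (\<forall>v\<in>verts G. f v \<in> L v))"
    and L: "\<forall>v\<in>verts G. finite (L v) \<and> card (L v) = Suc k"
  have "\<exists>T. T \<subseteq> L v \<and> finite T \<and> card T = k" if "v \<in> verts G" for v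
  proof -
    have "k \<le> card (L v)" using L that by simp
    then obtain T where "T \<subseteq> L v" "card T = k" "finite T" by (rule obtain_subset_with_card_n)
    then show ?thesis by blast
  qed
  then have "\<forall>v\<in>verts G. \<exists>T. T \<subseteq> L v \<and> finite T \<and> card T = k" by blast
  then obtain L' where L': "\<forall>v\<in>verts G. L' v \<subseteq> L v \<and> finite (L' v) \<and> card (L' v) = k"
    by (rule bchoice[THEN exE])
  then obtain f where "proper_coloring G f" "\<forall>v\<in>verts G. f v \<in> L' v" using k by blast
  then show "\<exists>f. proper_coloring G f \<and> (\<forall>v\<in>verts G. f v \<in> L v)" using L' by blast
qed

lemma choosable_mono:
  assumes "choosable G j" "j \<le> k"
  shows "choosable G k"
  using assms(2) by (induction rule: dec_induct) (simp_all add: assms(1) choosable_Suc)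

lemma greedy_list_coloring:
  fixes G :: "nat graph" and L :: "nat \<Rightarrow> nat set"
  assumes short: "\<And>x. x < n \<Longrightarrow> finite (L x) \<and> card {y. y < x \<and> adj G y x} < card (L x)"
    and loopless: "\<And>u. \<not> adj G u u"
  shows "\<exists>f. (\<forall>u<n. \<forall>v<n. adj G u v \<longrightarrow> f u \<noteq> f v) \<and> (\<forall>x<n. f x \<in> L x)"
  using short
proof (induction n)
  case (Suc n)
  then obtain f where f: "\<forall>u<n. \<forall>v<n. adj G u v \<longrightarrow> f u \<noteq> f v" "\<forall>x<n. f x \<in> L x" by auto
  let ?N = "{y. y < n \<and> adj G y n}"
  have "card (f ` ?N) < card (L n)"
    using card_image_le[of ?N f] Suc.prems[of n] by simp
  moreover have "finite (f ` ?N)" by simp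
  ultimately have "\<not> L n \<subseteq> f ` ?N" using card_mono[of "f ` ?N" "L n"] by linarith
  then obtain c where c: "c \<in> L n" "c \<notin> f ` ?N" by blast
  have "(f(n := c)) u \<noteq> (f(n := c)) v" if "u < Suc n" "v < Suc n" "adj G u v" for u v
  proof -
    have "f w \<noteq> c" if "w < n" "adj G w n" for w using that c(2) by blast
    then show ?thesis
      using \<open>u < Suc n\<close> \<open>v < Suc n\<close> \<open>adj G u v\<close> f(1) loopless[of n] adj_commute[of G v u]
      by (auto simp: less_Suc_eq)
  qed
  then have "\<forall>u<Suc n. \<forall>v<Suc n. adj G u v \<longrightarrow> (f(n := c)) u \<noteq> (f(n := c)) v" by blast
  moreover have "\<forall>x<Suc n. (f(n := c)) x \<in> L x" using f(2) c(1) by (simp add: less_Suc_eq)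
  ultimately show ?case by blast
qed simp

section \<open>Complements of two cliques\<close>

definition independent :: "'a graph \<Rightarrow> 'a set \<Rightarrow> bool" where
  "independent G S \<longleftrightarrow> (\<forall>x\<in>S. \<forall>y\<in>S. \<not> adj G x y)"

text \<open>The complete graph on \<open>V\<close> with the edges inside \<open>A\<close> and inside \<open>B\<close> removed; for disjoint
  \<open>A, B \<subseteq> V\<close> this is the join \<open>K\<^sub>m \<or> K\<^sub>p\<^sub>,\<^sub>q\<close> with \<open>m = |V - A - B|\<close>, \<open>p = |A|\<close>, \<open>q = |B|\<close>.\<close>
definition co_two_cliques :: "'a set \<Rightarrow> 'a set \<Rightarrow> 'a set \<Rightarrow> 'a graph" where
  "co_two_cliques V A B =
     (V, {{x, y} | x y. x \<noteq> y \<and> x \<in> V \<and> y \<in> V \<and> \<not> (x \<in> A \<and> y \<in> A) \<and> \<not> (x \<in> B \<and> y \<in> B)})"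

lemma verts_co_two_cliques [simp]: "verts (co_two_cliques V A B) = V"
  by (simp add: co_two_cliques_def verts_def)

lemma adj_co_two_cliques:
  "adj (co_two_cliques V A B) x y \<longleftrightarrow>
     x \<noteq> y \<and> x \<in> V \<and> y \<in> V \<and> \<not> (x \<in> A \<and> y \<in> A) \<and> \<not> (x \<in> B \<and> y \<in> B)"
  unfolding adj_def co_two_cliques_def edges_def by (auto simp: doubleton_eq_iff)

lemma co_two_cliques_commute: "co_two_cliques V A B = co_two_cliques V B A"
  unfolding co_two_cliques_def by (rule arg_cong[where f = "Pair V"]) blast

lemma wf_graph_co_two_cliques: "finite V \<Longrightarrow> wf_graph (co_two_cliques V A B)"
  unfolding wf_graph_def co_two_cliques_def verts_def edges_def by auto

lemma chordal_co_two_cliques: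
  assumes "card A \<le> 1" "finite A"
  shows "chordal (co_two_cliques V A B)"
  unfolding chordal_def
proof
  assume "\<exists>H. hole (co_two_cliques V A B) H"
  then obtain H where H: "hole (co_two_cliques V A B) H" by blast
  have "\<forall>x\<in>A. \<forall>y\<in>A. x = y" using assms card_le_Suc0_iff_eq by auto
  then show False
    using hole_subset_verts[OF H]
    by (intro no_hole_if_non_neighbours_independent[OF H, of B]) (auto simp: adj_co_two_cliques)
qed

locale two_cliques =
  fixes V A B :: "'a set"
  assumes finite_V: "finite V" and disjoint: "A \<inter> B = {}"
    and A_subset: "A \<subseteq> V" and B_subset: "B \<subseteq> V"
begin

abbreviation G :: "'a graph" where "G \<equiv> co_two_cliques V A B"

lemma wf_G: "wf_graph G"
  using finite_V by (rule wf_graph_co_two_cliques)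

lemma finite_A: "finite A"
  using A_subset finite_V finite_subset by blast

lemma swap: "two_cliques V B A"
  using finite_V disjoint A_subset B_subset by unfold_locales auto

context
  fixes Gs :: "'a graph" and Ci :: "'a set" and rest :: "'a set list"
  assumes inv: "lcp_invariant G Gs (Ci # rest)"
begin

abbreviation Gi :: "'a graph" where "Gi \<equiv> stage_graph G Gs Ci rest"

lemma verts_Gi: "verts Gi = V - \<Union> (set rest)"
  using verts_stage_graph_eq[OF wf_G inv] by simp

lemma part_disjoint_verts: "verts Gs \<inter> Ci = {}"
  using inv unfolding lcp_invariant_def by auto

lemma simple_edges_Gs: "simple_edges Gs"
  using inv unfolding lcp_invariant_def by auto

lemma adj_Gi_across:
  assumes "x \<in> verts Gi" "y \<in> verts Gi" "x \<noteq> y" "\<not> (x \<in> A \<and> y \<in> A)" "\<not> (x \<in> B \<and> y \<in> B)"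
  shows "adj Gi x y"
  using assms verts_Gi unfolding adj_stage_graph adj_co_two_cliques by auto

lemma not_adj_Gi_new_A: "x \<in> Ci \<Longrightarrow> x \<in> A \<Longrightarrow> y \<in> A \<Longrightarrow> \<not> adj Gi x y"
  using part_disjoint_verts adj_verts[OF simple_edges_Gs]
  unfolding adj_stage_graph adj_co_two_cliques by blast

lemma adj_Gi_A_iff: "x \<in> A \<Longrightarrow> y \<in> A \<Longrightarrow> adj Gi x y \<longleftrightarrow> adj Gs x y"
  unfolding adj_stage_graph adj_co_two_cliques by blast

lemma adj_hat_Gi_old:
  assumes "x \<in> verts Gs" "y \<in> verts Gs" "adj (hat Gi Ci) x y"
  shows "adj Gi x y"
proof -
  have "{x, y} \<in> edges Gi \<or> (\<exists>u w. {x, y} = {u, w} \<and> u \<in> Ci)"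
    using assms(3) edges_hat_subset[OF finite_part[OF wf_G inv], of Gi] unfolding adj_def by blast
  then show ?thesis
    using assms(1,2) part_disjoint_verts unfolding adj_def by (auto simp: doubleton_eq_iff)
qed

text \<open>Two vertices of \<open>A\<close> in the same part \<open>C\<^sub>i\<close> would lie on a common 4-hole with any two
  nonadjacent vertices of \<open>B\<close>, against the NC property.\<close>
lemma B_clique_in_Gi:
  assumes nc: "NC_set Gi Ci"
    and x: "x \<in> Ci" "x \<in> A" "x' \<in> Ci" "x' \<in> A" "x \<noteq> x'"
    and y: "y \<in> B" "y' \<in> B" "y \<in> verts Gi" "y' \<in> verts Gi" "y \<noteq> y'"
  shows "adj Gi y y'"
proof (rule ccontr)
  assume "\<not> adj Gi y y'"
  moreover have "x \<notin> B" "x' \<notin> B" "y \<notin> A" "y' \<notin> A" using x y disjoint by auto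
  moreover have "x \<in> verts Gi" "x' \<in> verts Gi" using x by auto
  ultimately have "hole Gi {x, y, x', y'}"
    using x y not_adj_Gi_new_A simple_edges_not_adj_self[OF simple_edges_stage_graph[OF wf_G inv]]
    by (intro hole_4cycle) (auto intro: adj_Gi_across)
  then have "card ({x, y, x', y'} \<inter> Ci) \<le> 1" using nc unfolding NC_set_def by blast
  moreover have "card {x, x'} \<le> card ({x, y, x', y'} \<inter> Ci)"
    using x finite_part[OF wf_G inv] by (intro card_mono) auto
  ultimately show False using x(5) by simp
qed

lemma chordal_Gi_if_B_clique:
  assumes B_clique: "\<And>y y'. y \<in> B \<Longrightarrow> y' \<in> B \<Longrightarrow> y \<in> verts Gi \<Longrightarrow> y' \<in> verts Gi \<Longrightarrow> y \<noteq> y'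
      \<Longrightarrow> adj Gi y y'"
    and no_A_hole: "\<And>H. hole Gs H \<Longrightarrow> \<not> H \<subseteq> A"
  shows "chordal Gi"
  unfolding chordal_def
proof
  assume "\<exists>H. hole Gi H"
  then obtain H where H: "hole Gi H" by blast
  have in_A: "x \<in> A" if x: "x \<in> H" for x
  proof -
    obtain z where "z \<in> H" "z \<noteq> x" "\<not> adj Gi x z"
      using hole_neighbour_and_non_neighbour(2)[OF H x] by blast
    then show "x \<in> A"
      using x hole_subset_verts[OF H] adj_Gi_across B_clique by blast
  qed
  have "x \<notin> Ci" if "x \<in> H" for x
    using hole_neighbour_and_non_neighbour(1)[OF H that] in_A that not_adj_Gi_new_A by blast
  then have "H \<subseteq> verts Gs" using hole_subset_verts[OF H] by auto
  then have "hole Gs H"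
    using in_A adj_Gi_A_iff by (intro hole_transfer[OF H]) auto
  then show False using no_A_hole in_A by blast
qed

lemma independent_hat_Gi_old:
  assumes "S \<subseteq> A \<inter> verts Gs" "independent Gs S"
  shows "independent (hat Gi Ci) S"
  using assms adj_hat_Gi_old adj_Gi_A_iff unfolding independent_def by blast

lemma hat_Gi_extend_independent:
  assumes nc: "NC_set Gi Ci"
    and x: "x \<in> Ci" "x \<in> A" "x' \<in> Ci" "x' \<in> A" "x \<noteq> x'"
    and no_A_hole: "\<And>H. hole Gs H \<Longrightarrow> \<not> H \<subseteq> A"
    and S: "S \<subseteq> A \<inter> verts Gs" "independent Gs S"
  shows "hat Gi Ci = Gi" "independent Gi (S \<union> (Ci \<inter> A))"
proof -
  have "chordal Gi"
    using B_clique_in_Gi[OF nc x] no_A_hole by (rule chordal_Gi_if_B_clique)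
  then show "hat Gi Ci = Gi" by (rule hat_chordal)
  show "independent Gi (S \<union> (Ci \<inter> A))"
    unfolding independent_def
  proof (intro ballI)
    fix x y assume "x \<in> S \<union> (Ci \<inter> A)" "y \<in> S \<union> (Ci \<inter> A)"
    then consider "x \<in> Ci \<inter> A" "y \<in> A" | "y \<in> Ci \<inter> A" "x \<in> A" | "x \<in> S" "y \<in> S"
      using S(1) by blast
    then show "\<not> adj Gi x y"
    proof cases
      case 2
      then show ?thesis using not_adj_Gi_new_A[of y x] adj_commute[of Gi x y] by blast
    next
      case 3
      then show ?thesis using adj_Gi_A_iff[of x y] S unfolding independent_def by blast
    qed (use not_adj_Gi_new_A in blast)
  qed
qed

end

text \<open>\<open>S\<close> holds vertices of \<open>A\<close> that stay pairwise nonadjacent to the end.  A part with at most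
  one vertex of \<open>A\<close> uses up one part for it; the vertices of \<open>A\<close> in a larger part join \<open>S\<close>.\<close>
lemma independent_plus_added_le:
  assumes "lcp_valid G Gs Cs" "lcp_invariant G Gs Cs" "\<And>H. hole Gs H \<Longrightarrow> \<not> H \<subseteq> A"
    "is_clique (final_graph G Gs Cs) A" "S \<subseteq> A \<inter> verts Gs" "independent Gs S"
  shows "card S + card (A - verts Gs) \<le> length Cs + 1"
  using assms
proof (induction Cs arbitrary: Gs S)
  case Nil
  have "verts Gs = V" using Nil.prems(2) unfolding lcp_invariant_def by auto
  have "\<forall>x\<in>S. \<forall>y\<in>S. x = y"
    using Nil.prems(4-6) unfolding is_clique_def independent_def final_graph.simps by blast
  moreover have "finite S" using Nil.prems(5) finite_A finite_subset by blast
  ultimately have "card S \<le> 1" by (simp add: card_le_Suc0_iff_eq)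
  then show ?case using \<open>verts Gs = V\<close> A_subset by (simp add: Diff_eq_empty_iff[THEN iffD2])
next
  case (Cons Ci rest)
  let ?H = "hat (Gi Gs Ci rest) Ci"
  have nc: "NC_set (Gi Gs Ci rest) Ci" and valid: "lcp_valid G ?H rest"
    and no_A_hole: "\<And>H'. hole ?H H' \<Longrightarrow> \<not> H' \<subseteq> A"
    using Cons.prems(1) unfolding lcp_valid_Cons chordal_def by auto
  have inv: "lcp_invariant G ?H rest" using lcp_invariant_hat[OF wf_G Cons.prems(2)] .
  have clique: "is_clique (final_graph G ?H rest) A" using Cons.prems(4) by simp
  have disj: "verts Gs \<inter> Ci = {}" using part_disjoint_verts[OF Cons.prems(2)] .
  show ?case
  proof (cases "card (Ci \<inter> A) \<le> 1")
    case True
    have "card S + card (A - verts ?H) \<le> length rest + 1"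
      using independent_hat_Gi_old[OF Cons.prems(2,5,6)] Cons.prems(5)
      by (intro Cons.IH[OF valid inv no_A_hole clique]) auto
    moreover have "card (A - verts Gs) \<le> card ((A - verts ?H) \<union> (Ci \<inter> A))"
      using finite_A by (intro card_mono) auto
    moreover have "\<dots> \<le> card (A - verts ?H) + card (Ci \<inter> A)" by (rule card_Un_le)
    ultimately show ?thesis using True by simp
  next
    case False
    then obtain x x' where x: "x \<in> Ci" "x \<in> A" "x' \<in> Ci" "x' \<in> A" "x \<noteq> x'"
      using card_le_Suc0_iff_eq[of "Ci \<inter> A"] finite_A by auto
    note ext = hat_Gi_extend_independent[OF Cons.prems(2) nc x Cons.prems(3) Cons.prems(5,6)]
    have "card (S \<union> (Ci \<inter> A)) + card (A - verts ?H) \<le> length rest + 1"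
      using ext Cons.prems(5) by (intro Cons.IH[OF valid inv no_A_hole clique]) auto
    moreover have "card (S \<union> (Ci \<inter> A)) = card S + card (Ci \<inter> A)"
      using Cons.prems(5) disj finite_A by (intro card_Un_disjoint) (auto intro: finite_subset)
    moreover have "card (A - verts Gs) = card (A - verts ?H) + card (Ci \<inter> A)"
    proof -
      have "A - verts Gs = (A - verts ?H) \<union> (Ci \<inter> A)" "(A - verts ?H) \<inter> (Ci \<inter> A) = {}"
        using disj by auto
      then show ?thesis using finite_A card_Un_disjoint by (metis finite_Diff finite_Int)
    qed
    ultimately show ?thesis by simp
  qed
qed

lemma card_le_parts_if_final_clique:
  assumes lc: "lc_partition G C Cs" and clique: "is_clique (final_graph G (delete G C) Cs) A"
  shows "card A \<le> length Cs + 1"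
proof -
  have indep: "independent (delete G C) (A - C)"
    unfolding independent_def adj_delete adj_co_two_cliques by blast
  have "\<not> H \<subseteq> A" if "hole (delete G C) H" for H
  proof
    assume "H \<subseteq> A"
    moreover have "H \<subseteq> V - C" using hole_subset_verts[OF that] by simp
    ultimately have "H \<subseteq> A - C" by blast
    then show False
      using no_hole_if_non_neighbours_independent[OF that, of "A - C"] indep
      unfolding independent_def by blast
  qed
  moreover have "lcp_valid G (delete G C) Cs" using lc by (simp add: lc_partition_def)
  ultimately have "card (A - C) + card (A - verts (delete G C)) \<le> length Cs + 1"
    using A_subset indep
    by (intro independent_plus_added_le[OF _ lcp_invariant_start[OF wf_G lc] _ clique]) auto
  moreover have "card A = card (A - C) + card (A \<inter> C)"
  proof -
    have "A = (A - C) \<union> (A \<inter> C)" by blast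
    then show ?thesis using finite_A by (metis card_Un_disjoint Diff_disjoint finite_Diff finite_Int
          Int_Diff_disjoint inf_commute)
  qed
  moreover have "A - verts (delete G C) = A \<inter> C" using A_subset by auto
  ultimately show ?thesis by simp
qed

lemma chordal_supergraph_clique:
  assumes "chordal F" "verts F = V" "\<And>v. \<not> adj F v v" "\<And>x y. adj G x y \<Longrightarrow> adj F x y"
  shows "is_clique F A \<or> is_clique F B"
proof (rule ccontr)
  assume "\<not> ?thesis"
  then obtain a a' b b' where ab: "a \<in> A" "a' \<in> A" "a \<noteq> a'" "\<not> adj F a a'"
    "b \<in> B" "b' \<in> B" "b \<noteq> b'" "\<not> adj F b b'"
    using A_subset B_subset assms(2) unfolding is_clique_def by blast
  have across: "adj F x y" "adj F y x" if "x \<in> A" "y \<in> B" for x y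
  proof -
    have "adj G x y" using that disjoint A_subset B_subset by (auto simp: adj_co_two_cliques)
    then show "adj F x y" by (rule assms(4))
    then show "adj F y x" by (simp add: adj_commute)
  qed
  have "a \<notin> B" "a' \<notin> B" "b \<notin> A" "b' \<notin> A" "{a, b, a', b'} \<subseteq> V"
    using ab disjoint A_subset B_subset by auto
  then have "hole F {a, b, a', b'}"
    using ab assms(2,3) across by (intro hole_4cycle) auto
  then show False using assms(1) unfolding chordal_def by blast
qed

lemma lc_partition_length_ge:
  assumes "card A \<le> card B" "lc_partition G C Cs"
  shows "card A \<le> length Cs + 1"
proof -
  let ?F = "final_graph G (delete G C) Cs"
  have "lcp_invariant G ?F []"
    using lcp_invariant_final[OF wf_G lcp_invariant_start[OF wf_G assms(2)]] .
  then have verts: "verts ?F = V" and simple: "simple_edges ?F"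
    and super: "\<forall>e\<in>edges G. e \<subseteq> V \<longrightarrow> e \<in> edges ?F"
    unfolding lcp_invariant_def by auto
  have "adj ?F x y" if "adj G x y" for x y
    using that super unfolding adj_def by (simp add: adj_co_two_cliques[unfolded adj_def])
  moreover have "chordal ?F"
    using assms(2) by (intro final_graph_chordal) (simp_all add: lc_partition_def)
  ultimately have "is_clique ?F A \<or> is_clique ?F B"
    using verts simple_edges_not_adj_self[OF simple] by (intro chordal_supergraph_clique)
  then show ?thesis
  proof
    assume "is_clique ?F B"
    then have "card B \<le> length Cs + 1"
      using two_cliques.card_le_parts_if_final_clique[OF swap, of C Cs] assms(2)
      by (simp add: co_two_cliques_commute)
    then show ?thesis using assms(1) by simp
  qed (use assms(2) card_le_parts_if_final_clique in blast)
qed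

context
  fixes Q :: "'a set" and a :: 'a and rest :: "'a set list"
  assumes Q: "Q \<subseteq> V" "B \<subseteq> Q" "a \<in> A" "a \<in> Q" and rest: "\<Union> (set rest) = V - Q"
begin

abbreviation Ga :: "'a graph" where
  "Ga \<equiv> stage_graph G (co_two_cliques (Q - {a}) {} B) {a} rest"

lemma verts_Ga: "verts Ga = Q"
  using Q by auto

lemma adj_Ga:
  "adj Ga x y \<longleftrightarrow>
     x \<noteq> y \<and> x \<in> Q \<and> y \<in> Q \<and> \<not> (x \<in> B \<and> y \<in> B) \<and> \<not> (x \<in> A \<and> y \<in> A \<and> (x = a \<or> y = a))"
  using Q disjoint unfolding adj_stage_graph adj_co_two_cliques rest by auto

lemma simple_edges_Ga: "simple_edges Ga"
  using Q rest wf_G wf_graph_co_two_cliques[of "Q - {a}"] finite_V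
  by (intro simple_edges_stage_graphI) (auto simp: wf_graph_iff_simple_edges finite_subset)

lemma hole_Ga_contains:
  assumes H: "hole Ga H"
  shows "a \<in> H"
proof (rule ccontr)
  assume "a \<notin> H"
  then show False
    using hole_subset_verts[OF H] verts_Ga
    by (intro no_hole_if_non_neighbours_independent[OF H, of B]) (auto simp: adj_Ga)
qed

text \<open>Every \<open>y \<in> A\<close> other than \<open>a\<close> lies on the hole \<open>a b y b'\<close> for any two
  \<open>b, b' \<in> B\<close>, so chordalizing by \<open>a\<close> makes all of \<open>A \<inter> Q\<close> a clique.\<close>
lemma loc_chordalize_Ga:
  assumes b: "b \<in> B" "b' \<in> B" "b \<noteq> b'"
  shows "loc_chordalize Ga a = co_two_cliques Q {} B"
proof (rule graph_eqI)
  show "simple_edges (loc_chordalize Ga a)" using simple_edges_Ga by (rule simple_edges_loc_chordalize)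
  show "simple_edges (co_two_cliques Q {} B)"
    using wf_graph_co_two_cliques[OF finite_subset[OF Q(1) finite_V]]
    by (simp add: wf_graph_iff_simple_edges)
  show "verts (loc_chordalize Ga a) = verts (co_two_cliques Q {} B)" using verts_Ga by simp
  fix x y
  have hole: "hole Ga {a, b, y, b'}" if "y \<in> A" "y \<in> Q" "y \<noteq> a" for y
    using that b Q disjoint adj_Ga
    by (intro hole_4cycle) (auto simp: adj_Ga)
  show "adj (loc_chordalize Ga a) x y \<longleftrightarrow> adj (co_two_cliques Q {} B) x y"
  proof
    assume "adj (loc_chordalize Ga a) x y"
    then show "adj (co_two_cliques Q {} B) x y"
      unfolding adj_loc_chordalize using hole_subset_verts[of Ga] verts_Ga Q(3) disjoint
      by (auto simp: adj_Ga adj_co_two_cliques)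
  next
    assume xy: "adj (co_two_cliques Q {} B) x y"
    show "adj (loc_chordalize Ga a) x y"
    proof (cases "adj Ga x y")
      case False
      then have "x \<in> A \<and> y \<in> A \<and> (x = a \<or> y = a)" using xy by (auto simp: adj_Ga adj_co_two_cliques)
      then show ?thesis
        using xy hole[of x] hole[of y] unfolding adj_loc_chordalize adj_co_two_cliques
        by (metis insert_iff)
    qed (simp add: adj_loc_chordalize)
  qed
qed

end

lemma lcp_valid_singletons:
  assumes b: "b \<in> B" "b' \<in> B" "b \<noteq> b'"
  shows "distinct as \<Longrightarrow> set as \<subseteq> A \<Longrightarrow>
    lcp_valid G (co_two_cliques (V - set as) {} B) (map (\<lambda>a. {a}) as)"
proof (induction as)
  case (Cons a as)
  let ?Q = "V - set as" and ?rest = "map (\<lambda>a. {a}) as"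
  have Q: "?Q \<subseteq> V" "B \<subseteq> ?Q" "a \<in> A" "a \<in> ?Q" and rest: "\<Union> (set ?rest) = V - ?Q"
    using Cons.prems A_subset B_subset disjoint by auto
  have "V - set (a # as) = ?Q - {a}" by auto
  moreover have "hat (Ga ?Q a ?rest) {a} = co_two_cliques ?Q {} B"
    using loc_chordalize_Ga[OF Q rest b] by (simp add: hat_singleton)
  moreover have "hole_cover (Ga ?Q a ?rest) {a}"
    unfolding hole_cover_def verts_Ga[OF Q rest] using Q(4) hole_Ga_contains[OF Q rest] by blast
  moreover have "card (H \<inter> {a}) \<le> 1" for H using card_mono[of "{a}" "H \<inter> {a}"] by simp
  then have "NC_set (Ga ?Q a ?rest) {a}"
    using hole_Ga_contains[OF Q rest] unfolding NC_set_def NC_vertex_def by blast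
  moreover have "chordal (co_two_cliques ?Q {} B)" by (simp add: chordal_co_two_cliques)
  moreover have "lcp_valid G (co_two_cliques ?Q {} B) ?rest" using Cons by simp
  ultimately show ?case by (simp del: lcp_valid.simps add: lcp_valid_Cons)
qed simp

lemma delete_all_but_one:
  assumes "a0 \<in> A"
  shows "delete G (A - {a0}) = co_two_cliques (V - (A - {a0})) {} B"
proof (rule graph_eqI)
  show "simple_edges (delete G (A - {a0}))"
    using wf_G by (simp add: simple_edges_delete wf_graph_iff_simple_edges)
  show "simple_edges (co_two_cliques (V - (A - {a0})) {} B)"
    using wf_graph_co_two_cliques[of "V - (A - {a0})"] finite_V by (simp add: wf_graph_iff_simple_edges)
qed (auto simp: adj_delete adj_co_two_cliques)

lemma lc_partition_singletons:
  assumes a: "a0 \<in> A" "a1 \<in> A" "a0 \<noteq> a1" and b: "b \<in> B" "b' \<in> B" "b \<noteq> b'"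
    and as: "distinct as" "set as = A - {a0}"
  shows "lc_partition G (A - {a0}) (map (\<lambda>a. {a}) as)"
proof -
  let ?C = "A - {a0}"
  have chordal: "chordal (delete G ?C)"
    using delete_all_but_one[OF a(1)] by (simp add: chordal_co_two_cliques)
  have "H \<inter> ?C \<noteq> {}" if H: "hole G H" for H
  proof
    assume "H \<inter> ?C = {}"
    then have "hole (delete G ?C) H"
      using hole_subset_verts[OF H] by (intro hole_transfer[OF H]) (auto simp: adj_delete)
    then show False using chordal unfolding chordal_def by blast
  qed
  then have "hole_cover G ?C" using a A_subset unfolding hole_cover_def by auto
  moreover have "\<forall>i<length as. \<forall>j<length as. i \<noteq> j \<longrightarrow> {as ! i} \<inter> {as ! j} = {}"
    using as(1) by (simp add: nth_eq_iff_index_eq)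
  moreover have "as \<noteq> []" using as(2) a by (metis Diff_iff empty_iff empty_set singletonD)
  moreover have "lcp_valid G (delete G ?C) (map (\<lambda>a. {a}) as)"
    using lcp_valid_singletons[OF b as(1)] as(2) delete_all_but_one[OF a(1)] by auto
  ultimately show ?thesis using as(2) unfolding lc_partition_def by auto
qed

lemma not_chordal:
  assumes "a \<in> A" "a' \<in> A" "a \<noteq> a'" "b \<in> B" "b' \<in> B" "b \<noteq> b'"
  shows "\<not> chordal G"
proof -
  have "hole G {a, b, a', b'}"
    using assms disjoint A_subset B_subset by (intro hole_4cycle) (auto simp: adj_co_two_cliques)
  then show ?thesis unfolding chordal_def by blast
qed

theorem nci_co_two_cliques:
  assumes "card A \<le> card B"
  shows "nci G = card A - 1"
proof (cases "card A \<le> 1")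
  case True
  then show ?thesis using chordal_co_two_cliques[OF True finite_A] by (simp add: nci_def)
next
  case False
  then obtain a0 a1 b b' where a: "a0 \<in> A" "a1 \<in> A" "a0 \<noteq> a1" and b: "b \<in> B" "b' \<in> B" "b \<noteq> b'"
    using assms card_le_Suc0_iff_eq[of A] card_le_Suc0_iff_eq[of B] finite_A card.infinite
    by (metis One_nat_def le_trans nat_le_linear not_one_le_zero)
  obtain as where as: "distinct as" "set as = A - {a0}"
    using finite_A finite_distinct_list by (meson finite_Diff)
  have lc: "lc_partition G (A - {a0}) (map (\<lambda>a. {a}) as)"
    using lc_partition_singletons[OF a b as] .
  have "length (map (\<lambda>a. {a}) as) = card A - 1"
    using distinct_card[OF as(1)] as(2) a(1) finite_A by simp
  then have "(LEAST l. \<exists>C Cs. lc_partition G C Cs \<and> length Cs = l) = card A - 1"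
    using lc lc_partition_length_ge[OF assms]
    by (intro Least_equality) (fastforce, fastforce)
  then show ?thesis using not_chordal[OF a b] by (simp add: nci_def)
qed

context
  fixes a b :: 'a
  assumes a: "a \<in> A" and b: "b \<in> B"
begin

lemma is_clique_rest_plus_two: "is_clique G ((V - A - B) \<union> {a, b})"
  using a b disjoint A_subset B_subset unfolding is_clique_def by (auto simp: adj_co_two_cliques)

lemma card_rest_plus_two: "card ((V - A - B) \<union> {a, b}) = card (V - A - B) + 2"
proof -
  have "a \<noteq> b" using a b disjoint by blast
  then show ?thesis using a b finite_V by (subst card_Un_disjoint) auto
qed

lemma clique_number_co_two_cliques: "clique_number G = card (V - A - B) + 2"
  unfolding clique_number_def
proof (rule Max_eqI)
  have "{card K | K. is_clique G K} \<subseteq> card ` Pow V" unfolding is_clique_def by auto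
  then show "finite {card K | K. is_clique G K}" using finite_V finite_subset by blast
  show "card (V - A - B) + 2 \<in> {card K | K. is_clique G K}"
    using is_clique_rest_plus_two card_rest_plus_two by force
  fix n assume "n \<in> {card K | K. is_clique G K}"
  then obtain K where K: "is_clique G K" "n = card K" by blast
  have "finite K" using K(1) finite_V finite_subset[of K V] by (simp add: is_clique_def)
  have "card (K \<inter> X) \<le> 1" if "X = A \<or> X = B" for X
  proof -
    have "\<forall>x\<in>K \<inter> X. \<forall>y\<in>K \<inter> X. x = y"
      using K(1) that unfolding is_clique_def adj_co_two_cliques by blast
    then show ?thesis using card_le_Suc0_iff_eq[of "K \<inter> X"] \<open>finite K\<close> by simp
  qed
  then have "card (K \<inter> A) \<le> 1" "card (K \<inter> B) \<le> 1" by blast+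
  moreover have "card K \<le> card ((V - A - B) \<union> (K \<inter> A) \<union> (K \<inter> B))"
    using K(1) finite_V \<open>finite K\<close> by (intro card_mono) (auto simp: is_clique_def)
  moreover have "\<dots> \<le> card (V - A - B) + card (K \<inter> A) + card (K \<inter> B)"
    by (meson card_Un_le add_le_mono order_refl le_trans)
  ultimately show "n \<le> card (V - A - B) + 2" using K(2) by simp
qed

lemma chromatic_number_co_two_cliques: "chromatic_number G = card (V - A - B) + 2"
  unfolding chromatic_number_def
proof (rule Least_equality)
  let ?m = "card (V - A - B)"
  obtain h where h: "bij_betw h (V - A - B) {0..<?m}"
    using ex_bij_betw_finite_nat[of "V - A - B"] finite_V by auto
  define f where "f v = (if v \<in> A then ?m else if v \<in> B then ?m + 1 else h v)" for v
  have range: "h v < ?m" if "v \<in> V - A - B" for v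
    using bij_betwE[OF h] that by auto
  have inj: "h u = h v \<Longrightarrow> u = v" if "u \<in> V - A - B" "v \<in> V - A - B" for u v
    using h that unfolding bij_betw_def inj_on_def by blast
  have "f u \<noteq> f v" if "adj G u v" for u v
    using that range[of u] range[of v] inj[of u v] disjoint
    unfolding f_def adj_co_two_cliques by (auto split: if_splits)
  moreover have "f v < ?m + 2" if "v \<in> V" for v using that range[of v] unfolding f_def by auto
  ultimately have "proper_coloring G f" "\<forall>v\<in>verts G. f v < ?m + 2"
    unfolding proper_coloring_def by auto
  then show "\<exists>f :: 'a \<Rightarrow> nat. proper_coloring G f \<and> (\<forall>v\<in>verts G. f v < ?m + 2)" by blast
next
  fix c assume "\<exists>f :: 'a \<Rightarrow> nat. proper_coloring G f \<and> (\<forall>v\<in>verts G. f v < c)"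
  then show "card (V - A - B) + 2 \<le> c"
    using card_clique_le_colours[OF is_clique_rest_plus_two] card_rest_plus_two by metis
qed

end

end

section \<open>The witness\<close>

context
  fixes k :: nat and A :: "nat set"
  assumes A: "A \<subseteq> {0..<k}"
begin

abbreviation Gk :: "nat graph" where
  "Gk \<equiv> co_two_cliques {0..<k + k ^ k} A {k..<k + k ^ k}"

lemma earlier_neighbours: "{y. y < x \<and> adj Gk y x} \<subseteq> {0..<k}"
  by (auto simp: adj_co_two_cliques)

lemma choosable_Gk: "choosable Gk (k + 1)"
  unfolding choosable_def
proof (intro allI impI)
  fix L :: "nat \<Rightarrow> nat set"
  assume L: "\<forall>v\<in>verts Gk. finite (L v) \<and> card (L v) = k + 1"
  have "card {y. y < x \<and> adj Gk y x} \<le> k" for x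
    using card_mono[OF _ earlier_neighbours, of x] by simp
  then have "finite (L x) \<and> card {y. y < x \<and> adj Gk y x} < card (L x)" if "x < k + k ^ k" for x
    using L that by (simp add: less_Suc_eq_le)
  moreover have "\<not> adj Gk u u" for u by (simp add: adj_co_two_cliques)
  ultimately obtain f where f: "\<forall>u<k + k ^ k. \<forall>v<k + k ^ k. adj Gk u v \<longrightarrow> f u \<noteq> f v"
    "\<forall>x<k + k ^ k. f x \<in> L x"
    using greedy_list_coloring[of "k + k ^ k" L Gk] by blast
  then show "\<exists>f. proper_coloring Gk f \<and> (\<forall>v\<in>verts Gk. f v \<in> L v)"
    unfolding proper_coloring_def by (intro exI[of _ f]) auto
qed

text \<open>The \<open>k\<^sup>k\<close> vertices of \<open>B\<close> are indexed by the choice functions \<open>d\<close> picking one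
  colour \<open>j k + d j\<close> from each of the disjoint lists \<open>{j k ..< j k + k}\<close> of the vertices
  \<open>j < k\<close>; whatever colours those vertices get, the vertex of \<open>B\<close> indexed by that very
  choice has all its colours used on its neighbours.\<close>
lemma not_choosable_Gk: "\<not> choosable Gk k"
proof
  assume choosable: "choosable Gk k"
  let ?D = "{0..<k} \<rightarrow>\<^sub>E {0..<k}"
  have "card ?D = k ^ k" by (simp add: card_PiE)
  then obtain h where h: "bij_betw h {0..<k ^ k} ?D"
    using ex_bij_betw_nat_finite[of ?D] by (auto simp: finite_PiE)
  define L where "L u = (if u < k then {u * k..<u * k + k} else (\<lambda>j. j * k + h (u - k) j) ` {0..<k})"
    for u
  have "finite (L u)" for u by (simp add: L_def)
  moreover have "card (L u) = k" if "u \<in> verts Gk" for u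
  proof (cases "u < k")
    case False
    then have hu: "h (u - k) \<in> ?D" using that bij_betwE[OF h] by auto
    have digit: "(j * k + h (u - k) j) div k = j" if "j < k" for j
      using that PiE_mem[OF hu, of j] by simp
    have "inj_on (\<lambda>j. j * k + h (u - k) j) {0..<k}"
      by (rule inj_on_inverseI[of _ "\<lambda>m. m div k"], rule digit) simp
    then show ?thesis using False by (simp add: L_def card_image)
  qed (simp add: L_def)
  ultimately obtain f where f: "proper_coloring Gk f" "\<forall>v\<in>verts Gk. f v \<in> L v"
    using choosable[unfolded choosable_def, THEN spec, of L] by blast
  define d where "d = (\<lambda>u\<in>{0..<k}. f u - u * k)"
  have f_small: "f u \<in> {u * k..<u * k + k}" if "u < k" for u
    using f(2)[rule_format, of u] that by (simp add: L_def)
  then have "d \<in> ?D" unfolding d_def by fastforce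
  then obtain n where n: "n < k ^ k" "h n = d"
    using h unfolding bij_betw_def by (metis atLeastLessThan_iff imageE)
  then have "f (k + n) \<in> L (k + n)" using f(2) by simp
  then obtain j where j: "j < k" "f (k + n) = j * k + d j" using n(2) by (auto simp: L_def)
  then have "f (k + n) = f j" using f_small[of j] by (simp add: d_def)
  moreover have "adj Gk j (k + n)" using A j(1) n(1) by (auto simp: adj_co_two_cliques)
  ultimately show False
    using f(1)[unfolded proper_coloring_def, rule_format, of j "k + n"] j(1) n(1) by simp
qed

lemma list_chromatic_number_Gk: "list_chromatic_number Gk = k + 1"
  unfolding list_chromatic_number_eq_Least
proof (rule Least_equality)
  show "choosable Gk (k + 1)" by (rule choosable_Gk)
  show "k + 1 \<le> j" if "choosable Gk j" for j
    using choosable_mono[OF that, of k] not_choosable_Gk by linarith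
qed

end

theorem theorem4p5:
  fixes s t :: nat
  assumes "s \<ge> 1"
  shows "\<exists>G :: nat graph. wf_graph G \<and>
           chromatic_number G = s + 1 \<and> clique_number G = s + 1 \<and>
           nci G = t \<and> list_chromatic_number G = s + t + 1"
proof -
  define k where "k = s + t"
  let ?A = "{s - 1..<k}" and ?B = "{k..<k + k ^ k}"
  interpret two_cliques "{0..<k + k ^ k}" ?A ?B by unfold_locales auto
  have "k \<le> k ^ k" using assms k_def by (simp add: self_le_power)
  then have a: "s - 1 \<in> ?A" and b: "k \<in> ?B" and "card ?A \<le> card ?B"
    using assms k_def by auto
  moreover have "{0..<k + k ^ k} - ?A - ?B = {0..<s - 1}" using k_def by auto
  moreover have "card ?A = t + 1" using assms k_def by simp
  ultimately show ?thesis
    using wf_G chromatic_number_co_two_cliques[OF a b] clique_number_co_two_cliques[OF a b]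
      nci_co_two_cliques list_chromatic_number_Gk[of ?A k] assms k_def
    by (intro exI[of _ G]) simp
qed

end
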